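(* Let $K$ be a (not necessarily commutative) field and $K[X]$ the polynomial ring over $K$ in a central indeterminate $X$. Then the projective line $\mathbb{P}(K[X])$ is connected and has infinite diameter.
   Context: For a ring $R$ with $1$, a pair $(a,b)\in R^2$ is admissible if it is the first row of an invertible $2\times2$ matrix over $R$; $\mathbb{P}(R)$ is the set of cyclic submodules $R(a,b)$ of the left module $R^2$ with $(a,b)$ admissible. Two points $R(a,b)$, $R(c,d)$ are distant iff $\begin{pmatrix}a&b\\c&d\end{pmatrix}$ is invertible. Connectedness, distance (least number of edges of a joining path) and diameter (supremum of distances) refer to the graph on $\mathbb{P}(R)$ whose edges are pairs of distant points. *)

theory Defs
  imports "HOL-Computational_Algebra.Polynomial" "HOL-Library.Extended_Nat"
begin

text \<open>The library multiplication on 'a poly requires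
  commutativity, so we define the (convolution) product explicitly; X commutes
  with the coefficients.\<close>

definition pmul :: "'a::division_ring poly \<Rightarrow> 'a poly \<Rightarrow> 'a poly" where
  "pmul p q = (\<Sum>i\<le>degree p. \<Sum>j\<le>degree q. monom (coeff p i * coeff q j) (i + j))"

definition pone :: "'a::division_ring poly" where
  "pone = monom 1 0"

definition inv2 :: "'a::division_ring poly \<Rightarrow> 'a poly \<Rightarrow> 'a poly \<Rightarrow> 'a poly \<Rightarrow> bool" where
  "inv2 a b c d \<longleftrightarrow> (\<exists>a' b' c' d'.
      pmul a a' + pmul b c' = pone \<and> pmul a b' + pmul b d' = 0 \<and>
      pmul c a' + pmul d c' = 0 \<and> pmul c b' + pmul d d' = pone \<and>
      pmul a' a + pmul b' c = pone \<and> pmul a' b + pmul b' d = 0 \<and>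
      pmul c' a + pmul d' c = 0 \<and> pmul c' b + pmul d' d = pone)"

definition admissible :: "'a::division_ring poly \<Rightarrow> 'a poly \<Rightarrow> bool" where
  "admissible a b \<longleftrightarrow> (\<exists>c d. inv2 a b c d)"

definition cyc :: "'a::division_ring poly \<Rightarrow> 'a poly \<Rightarrow> ('a poly \<times> 'a poly) set" where
  "cyc a b = {(pmul r a, pmul r b) | r. True}"

definition projline :: "('a::division_ring poly \<times> 'a poly) set set" where
  "projline = {cyc a b | a b. admissible a b}"

definition distant :: "('a::division_ring poly \<times> 'a poly) set \<Rightarrow> ('a poly \<times> 'a poly) set \<Rightarrow> bool" where
  "distant P Q \<longleftrightarrow> (\<exists>a b c d. P = cyc a b \<and> Q = cyc c d \<and> inv2 a b c d)"

definition dist_edges :: "(('a::division_ring poly \<times> 'a poly) set \<times> ('a poly \<times> 'a poly) set) set" where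
  "dist_edges = {(P, Q). P \<in> projline \<and> Q \<in> projline \<and> distant P Q}"

definition pl_connected :: "'a::division_ring itself \<Rightarrow> bool" where
  "pl_connected _ \<longleftrightarrow> (\<forall>P\<in>(projline :: ('a poly \<times> 'a poly) set set). \<forall>Q\<in>projline.
       (P, Q) \<in> (dist_edges :: (('a poly \<times> 'a poly) set \<times> _) set)\<^sup>*)"

text \<open>Distance: least number of edges of a joining path (\<infinity> if none).\<close>
definition pl_dist :: "('a::division_ring poly \<times> 'a poly) set \<Rightarrow> ('a poly \<times> 'a poly) set \<Rightarrow> enat" where
  "pl_dist P Q = (INF n\<in>{n. (P, Q) \<in> dist_edges ^^ n}. enat n)"

definition pl_diameter :: "'a::division_ring itself \<Rightarrow> enat" where
  "pl_diameter _ = (SUP P\<in>(projline :: ('a poly \<times> 'a poly) set set). SUP Q\<in>projline. pl_dist P Q)"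

end

theory Submission
  imports Defs "HOL-Computational_Algebra.Polynomial_FPS"
begin

text \<open>
  Invertible 2x2 matrices over \<open>K[X]\<close>, acting by right multiplication on the rows \<open>(a, b)\<close>,
  are automorphisms of the distant graph. Elementary matrices perform the steps of the Euclidean
  algorithm for right division by polynomials with invertible leading coefficient, so every point
  is joined to \<open>\<infinity> = K[X](1, 0)\<close>.

  Call \<open>(a, b)\<close> \<open>k\<close>-long if the Euclidean algorithm on it performs at least \<open>k\<close> divisions,
  whichever quotients are chosen. A neighbour of \<open>\<infinity>\<close> has the form \<open>K[X](t, 1)\<close>, and the
  matrix with rows \<open>(0, 1)\<close>, \<open>(1, -t)\<close> maps it to \<open>\<infinity>\<close> and \<open>K[X](a, b)\<close> to \<open>K[X](b, a - b t)\<close>.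
  Since \<open>(b, a - b t)\<close> is \<open>k\<close>-long whenever \<open>(a, b)\<close> is \<open>(k+1)\<close>-long, induction shows that a
  point at distance \<open>n\<close> from \<open>\<infinity>\<close> is not \<open>(n+1)\<close>-long. The pairs obtained from \<open>(1, 0)\<close> by
  \<open>k\<close> steps \<open>(u, v) \<mapsto> (u X + v, u)\<close>, for which every quotient is \<open>X\<close>, are \<open>k\<close>-long,
  so the diameter is infinite.
\<close>

lemma coeff_pmul: "coeff (pmul p q) n = (\<Sum>i\<le>n. coeff p i * coeff q (n - i))"
proof -
  let ?f = "\<lambda>i. coeff p i * coeff q (n - i)"
  have inner: "(\<Sum>j\<le>degree q. if i + j = n then coeff p i * coeff q j else 0)
      = (if i \<le> n then ?f i else 0)" for i
  proof (cases "i \<le> n \<and> n - i \<le> degree q")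
    case True
    then have "(\<Sum>j\<le>degree q. if i + j = n then coeff p i * coeff q j else 0)
       = (\<Sum>j\<le>degree q. if j = n - i then coeff p i * coeff q j else 0)"
      by (intro sum.cong) auto
    then show ?thesis using True by simp
  next
    case False
    then show ?thesis by (auto simp: coeff_eq_0 intro!: sum.neutral)
  qed
  have "coeff (pmul p q) n = (\<Sum>i\<le>degree p. if i \<le> n then ?f i else 0)"
    unfolding pmul_def by (simp add: coeff_sum inner)
  also have "\<dots> = (\<Sum>i\<in>{..degree p} \<inter> {..n}. ?f i)"
    by (subst sum.inter_restrict) auto
  also have "\<dots> = (\<Sum>i\<le>n. ?f i)"
    by (rule sum.mono_neutral_left) (auto simp: coeff_eq_0)
  finally show ?thesis .
qed

text \<open>Identities between products \<open>pmul\<close> are transported along \<open>fps_of_poly\<close>, which turns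
  \<open>pmul\<close> into the multiplication of the ring \<open>'a fps\<close>; unlike \<open>'a poly\<close>, that ring needs no
  commutativity of \<open>'a\<close>.\<close>
lemma fps_of_poly_pmul [simp]: "fps_of_poly (pmul p q) = fps_of_poly p * fps_of_poly q"
  by (rule fps_ext) (simp add: coeff_pmul fps_mult_nth atLeast0AtMost)

lemma fps_of_poly_pone [simp]: "fps_of_poly pone = 1"
  by (simp add: pone_def monom_0)

lemma pone_neq_0 [simp]: "pone \<noteq> 0"
  by (simp add: pone_def)

lemma degree_pone [simp]: "degree pone = 0"
  by (simp add: pone_def monom_0)

lemmas fps_of_poly_ring_simps [simp] =
  fps_of_poly_add fps_of_poly_diff fps_of_poly_uminus fps_of_poly_const

lemma fps_of_poly_inj: "fps_of_poly p = fps_of_poly q \<Longrightarrow> p = q"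
  by (simp add: fps_of_poly_eq_iff)

lemma pmul_eq_0_iff [simp]: "pmul p q = 0 \<longleftrightarrow> p = 0 \<or> q = 0"
  by (metis fps_of_poly_pmul fps_of_poly_0 fps_of_poly_eq_iff mult_eq_0_iff)

lemma pmul_simps [simp]:
  "pmul 0 q = 0" "pmul p 0 = 0" "pmul pone q = q" "pmul p pone = p"
  "pmul [:1:] q = q" "pmul p [:1:] = p"
  "pmul (- p) q = - pmul p q" "pmul p (- q) = - pmul p q"
  by (auto intro: fps_of_poly_inj)

lemma coeff_pmul_degree_add:
  "coeff (pmul p q) (degree p + degree q) = lead_coeff p * lead_coeff q"
proof -
  have "coeff p i * coeff q (degree p + degree q - i) = 0" if "i \<noteq> degree p" for i
    using that by (cases "i < degree p") (auto simp: coeff_eq_0)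
  then show ?thesis
    by (simp add: coeff_pmul sum.remove[of _ "degree p"] sum.neutral)
qed

lemma coeff_pmul_above_degree: "degree p + degree q < n \<Longrightarrow> coeff (pmul p q) n = 0"
  unfolding coeff_pmul
proof (rule sum.neutral, rule ballI)
  fix i assume "degree p + degree q < n" "i \<in> {..n}"
  then have "degree p < i \<or> degree q < n - i" by auto
  then show "coeff p i * coeff q (n - i) = 0" by (auto simp: coeff_eq_0)
qed

lemma degree_pmul: "p \<noteq> 0 \<Longrightarrow> q \<noteq> 0 \<Longrightarrow> degree (pmul p q) = degree p + degree q"
  by (intro antisym degree_le le_degree) (auto simp: coeff_pmul_above_degree coeff_pmul_degree_add)

lemma pmul_eq_pone_imp_const:
  assumes "pmul p q = pone" obtains c where "c \<noteq> 0" "p = [:c:]"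
proof -
  from assms have "p \<noteq> 0" "q \<noteq> 0" by auto
  with assms have "degree p = 0" using degree_pmul by fastforce
  with \<open>p \<noteq> 0\<close> show thesis using that by (metis degree_0_id pCons_0_0)
qed

lemma degree_pmul_const: "c \<noteq> 0 \<Longrightarrow> degree (pmul p [:c:]) = degree p"
  by (cases "p = 0") (simp_all add: degree_pmul)

lemma fps_const_inverse_cancel [simp]:
  fixes c :: "'a::division_ring"
  assumes "c \<noteq> 0"
  shows "fps_const (inverse c) * (fps_const c * f) = f"
    and "fps_const c * (fps_const (inverse c) * f) = f"
    and "f * fps_const c * fps_const (inverse c) = f"
    and "f * fps_const (inverse c) * fps_const c = f"
  using assms by (simp_all flip: mult.assoc add: mult.assoc fps_const_mult)

lemma row_mat2_mat2_col_assoc: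
  fixes a b e f g h e' f' g' h' x y :: "'a::ring"
  shows "(a*e+b*g)*(e'*x+f'*y) + (a*f+b*h)*(g'*x+h'*y) =
    a*((e*e'+f*g')*x + (e*f'+f*h')*y) + b*((g*e'+h*g')*x + (g*f'+h*h')*y)"
  by (simp add: algebra_simps)

lemma inv2_mult:
  assumes "inv2 a b c d" "inv2 e f g h"
  shows "inv2 (pmul a e + pmul b g) (pmul a f + pmul b h) (pmul c e + pmul d g) (pmul c f + pmul d h)"
proof -
  obtain a' b' c' d' where M: "pmul a a' + pmul b c' = pone" "pmul a b' + pmul b d' = 0"
      "pmul c a' + pmul d c' = 0" "pmul c b' + pmul d d' = pone"
      "pmul a' a + pmul b' c = pone" "pmul a' b + pmul b' d = 0"
      "pmul c' a + pmul d' c = 0" "pmul c' b + pmul d' d = pone"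
    using assms(1) unfolding inv2_def by auto
  obtain e' f' g' h' where N: "pmul e e' + pmul f g' = pone" "pmul e f' + pmul f h' = 0"
      "pmul g e' + pmul h g' = 0" "pmul g f' + pmul h h' = pone"
      "pmul e' e + pmul f' g = pone" "pmul e' f + pmul f' h = 0"
      "pmul g' e + pmul h' g = 0" "pmul g' f + pmul h' h = pone"
    using assms(2) unfolding inv2_def by auto
  note fM = M[THEN arg_cong[where f = fps_of_poly], simplified]
  note fN = N[THEN arg_cong[where f = fps_of_poly], simplified]
  show ?thesis
    unfolding inv2_def
    by (intro exI[of _ "pmul e' a' + pmul f' c'"] exI[of _ "pmul e' b' + pmul f' d'"]
        exI[of _ "pmul g' a' + pmul h' c'"] exI[of _ "pmul g' b' + pmul h' d'"] conjI;
        rule fps_of_poly_inj)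
       (simp_all add: row_mat2_mat2_col_assoc fM fN)
qed

lemma inv2_swap_rows: "inv2 a b c d \<Longrightarrow> inv2 c d a b"
  unfolding inv2_def by (metis add.commute)

lemma inv2_lower_elementary: "inv2 pone 0 t pone"
  unfolding inv2_def
  by (intro exI[of _ pone] exI[of _ 0] exI[of _ "- t"] exI[of _ pone] conjI; rule fps_of_poly_inj) simp_all

lemma inv2_upper_elementary: "inv2 pone t 0 pone"
  unfolding inv2_def
  by (intro exI[of _ pone] exI[of _ "- t"] exI[of _ 0] exI[of _ pone] conjI; rule fps_of_poly_inj) simp_all

lemma inv2_const_pone_0: "c \<noteq> 0 \<Longrightarrow> inv2 t [:c:] pone 0"
  unfolding inv2_def
  by (intro exI[of _ 0] exI[of _ pone] exI[of _ "[:inverse c:]"] exI[of _ "- pmul [:inverse c:] t"]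
      conjI; rule fps_of_poly_inj) (simp_all flip: mult.assoc)

lemma inv2_0_pone_pone: "inv2 0 pone pone t"
  unfolding inv2_def
  by (intro exI[of _ "- t"] exI[of _ pone] exI[of _ pone] exI[of _ 0] conjI; rule fps_of_poly_inj) simp_all

definition mat_image ::
    "'a::division_ring poly \<Rightarrow> 'a poly \<Rightarrow> 'a poly \<Rightarrow> 'a poly \<Rightarrow> ('a poly \<times> 'a poly) set \<Rightarrow> ('a poly \<times> 'a poly) set"
  where "mat_image m1 m2 m3 m4 P = (\<lambda>(x, y). (pmul x m1 + pmul y m3, pmul x m2 + pmul y m4)) ` P"

lemma mat_image_cyc:
  "mat_image m1 m2 m3 m4 (cyc a b) = cyc (pmul a m1 + pmul b m3) (pmul a m2 + pmul b m4)"
proof -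
  have lin: "pmul (pmul r a) m + pmul (pmul r b) m' = pmul r (pmul a m + pmul b m')" for r m m'
    by (rule fps_of_poly_inj) (simp add: algebra_simps)
  show ?thesis
    unfolding mat_image_def cyc_def by (force simp: lin)
qed

lemma admissible_mat_mult:
  "inv2 m1 m2 m3 m4 \<Longrightarrow> admissible a b \<Longrightarrow> admissible (pmul a m1 + pmul b m3) (pmul a m2 + pmul b m4)"
  unfolding admissible_def using inv2_mult by blast

lemma dist_edges_intro: "inv2 a b c d \<Longrightarrow> (cyc a b, cyc c d) \<in> dist_edges"
  unfolding dist_edges_def projline_def distant_def admissible_def using inv2_swap_rows by blast

lemma sym_dist_edges: "sym dist_edges"
  unfolding sym_def dist_edges_def distant_def using inv2_swap_rows by blast

lemma dist_edges_mat_image: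
  assumes m: "inv2 m1 m2 m3 m4" and e: "(P, Q) \<in> dist_edges"
  shows "(mat_image m1 m2 m3 m4 P, mat_image m1 m2 m3 m4 Q) \<in> dist_edges"
proof -
  obtain a b c d where "P = cyc a b" "Q = cyc c d" "inv2 a b c d"
    using e unfolding dist_edges_def distant_def by auto
  then show ?thesis
    using inv2_mult[OF _ m] by (simp add: mat_image_cyc dist_edges_intro)
qed

lemma relpow_dist_edges_mat_image:
  assumes "inv2 m1 m2 m3 m4" "(P, Q) \<in> dist_edges ^^ n"
  shows "(mat_image m1 m2 m3 m4 P, mat_image m1 m2 m3 m4 Q) \<in> dist_edges ^^ n"
  using assms(2)
proof (induction n arbitrary: Q)
  case (Suc n)
  then obtain R where "(P, R) \<in> dist_edges ^^ n" "(R, Q) \<in> dist_edges" by auto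
  then show ?case using Suc.IH dist_edges_mat_image[OF assms(1)] by auto
qed simp

lemma rtrancl_dist_edges_mat_image:
  "inv2 m1 m2 m3 m4 \<Longrightarrow> (P, Q) \<in> dist_edges\<^sup>* \<Longrightarrow>
    (mat_image m1 m2 m3 m4 P, mat_image m1 m2 m3 m4 Q) \<in> dist_edges\<^sup>*"
  using relpow_dist_edges_mat_image by (metis rtrancl_power)

lemma cyc_pmul_const_left: "c \<noteq> 0 \<Longrightarrow> cyc (pmul [:c:] a) (pmul [:c:] b) = cyc a b"
proof -
  assume "c \<noteq> 0"
  then have "pmul r x = pmul (pmul r [:inverse c:]) (pmul [:c:] x)"
    and "pmul (pmul r [:c:]) x = pmul r (pmul [:c:] x)" for r x
    by (auto intro!: fps_of_poly_inj simp: mult.assoc)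
  then show ?thesis
    unfolding cyc_def by (auto; metis)
qed

lemma inv2_upper_right_0_imp_const: "inv2 a 0 c d \<Longrightarrow> \<exists>\<alpha>. \<alpha> \<noteq> 0 \<and> a = [:\<alpha>:]"
  unfolding inv2_def by (auto elim: pmul_eq_pone_imp_const)

lemma admissible_0_left_imp_const: "admissible 0 b \<Longrightarrow> degree b = 0"
  unfolding admissible_def inv2_def by (auto elim: pmul_eq_pone_imp_const)

lemma reduce_degree:
  assumes "b \<noteq> 0" "a \<noteq> 0" "degree b \<le> degree a"
  obtains q where "a - pmul b q = 0 \<or> degree (a - pmul b q) < degree a"
proof
  define q where "q = monom (inverse (lead_coeff b) * lead_coeff a) (degree a - degree b)"
  have "q \<noteq> 0" "degree q = degree a - degree b"
    "lead_coeff q = inverse (lead_coeff b) * lead_coeff a"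
    using assms unfolding q_def by (auto simp: degree_monom_eq)
  then have "degree (pmul b q) = degree a" and "coeff (pmul b q) (degree a) = lead_coeff a"
    using assms degree_pmul[of b q] coeff_pmul_degree_add[of b q] by (auto simp flip: mult.assoc)
  then have "degree (a - pmul b q) \<le> degree a" "coeff (a - pmul b q) (degree a) = 0"
    using degree_diff_le[of a "degree a" "pmul b q"] by simp_all
  then show "a - pmul b q = 0 \<or> degree (a - pmul b q) < degree a"
    by (metis le_neq_implies_less leading_coeff_0_iff)
qed

lemma admissible_connected_pone_0:
  "admissible a b \<Longrightarrow> (cyc a b, cyc pone 0) \<in> dist_edges\<^sup>*"
proof (induction "degree a + degree b" arbitrary: a b rule: less_induct)
  case less
  consider "b = 0" | "b \<noteq> 0" "degree b = 0" | "degree b \<noteq> 0" "degree b \<le> degree a"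
    | "degree a < degree b" by fastforce
  then show ?case
  proof cases
    case 1
    then obtain \<alpha> where "\<alpha> \<noteq> 0" "a = [:\<alpha>:]"
      using less.prems inv2_upper_right_0_imp_const unfolding admissible_def by blast
    then show ?thesis using 1 cyc_pmul_const_left[of \<alpha> pone 0] by simp
  next
    case 2
    then obtain \<beta> where "\<beta> \<noteq> 0" "b = [:\<beta>:]" by (metis degree_0_id pCons_0_0)
    then show ?thesis by (simp add: dist_edges_intro inv2_const_pone_0 r_into_rtrancl)
  next
    case 3
    with less.prems have "a \<noteq> 0" using admissible_0_left_imp_const[of b] by auto
    with 3 obtain q where "a - pmul b q = 0 \<or> degree (a - pmul b q) < degree a"
      by (metis reduce_degree degree_0)
    with 3 have "(cyc (a - pmul b q) b, cyc pone 0) \<in> dist_edges\<^sup>*"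
      using less admissible_mat_mult[OF inv2_lower_elementary[of "- q"]] by fastforce
    from rtrancl_dist_edges_mat_image[OF inv2_lower_elementary[of q] this]
    show ?thesis by (simp add: mat_image_cyc)
  next
    case 4
    with less.prems have "a \<noteq> 0" using admissible_0_left_imp_const[of b] by auto
    with 4 obtain q where "b - pmul a q = 0 \<or> degree (b - pmul a q) < degree b"
      by (metis reduce_degree less_imp_le degree_0 not_less0)
    with 4 have "(cyc a (b - pmul a q), cyc pone 0) \<in> dist_edges\<^sup>*"
      using less admissible_mat_mult[OF inv2_upper_elementary[of "- q"]] by fastforce
    from rtrancl_dist_edges_mat_image[OF inv2_upper_elementary[of q] this]
    have "(cyc a b, cyc pone q) \<in> dist_edges\<^sup>*" by (simp add: mat_image_cyc)
    also have "(cyc pone q, cyc 0 pone) \<in> dist_edges"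
      using dist_edges_intro[OF inv2_upper_elementary] .
    also have "(cyc 0 pone, cyc pone 0) \<in> dist_edges"
      using dist_edges_intro[OF inv2_0_pone_pone] .
    finally show ?thesis .
  qed
qed

lemma pl_connected: "pl_connected TYPE('a::division_ring)"
  unfolding pl_connected_def
proof (intro ballI)
  fix P Q :: "('a poly \<times> 'a poly) set"
  assume "P \<in> projline" "Q \<in> projline"
  then have "(P, cyc pone 0) \<in> dist_edges\<^sup>*" "(Q, cyc pone 0) \<in> dist_edges\<^sup>*"
    unfolding projline_def using admissible_connected_pone_0 by auto
  then show "(P, Q) \<in> dist_edges\<^sup>*"
    using sym_rtrancl[OF sym_dist_edges] by (meson rtrancl_trans symD)
qed

definition deg_lt :: "'a::zero poly \<Rightarrow> 'a poly \<Rightarrow> bool" where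
  "deg_lt r b \<longleftrightarrow> r = 0 \<or> degree r < degree b"

fun long_euclid :: "nat \<Rightarrow> 'a::division_ring poly \<Rightarrow> 'a poly \<Rightarrow> bool" where
  "long_euclid 0 a b \<longleftrightarrow> True"
| "long_euclid (Suc k) a b \<longleftrightarrow>
    b \<noteq> 0 \<and> (\<forall>q. deg_lt (a - pmul b q) b \<longrightarrow> long_euclid k b (a - pmul b q))"

lemma long_euclid_mono: "long_euclid k a b \<Longrightarrow> m \<le> k \<Longrightarrow> long_euclid m a b"
proof (induction k arbitrary: m a b)
  case (Suc k)
  then show ?case by (cases m) auto
qed simp

lemma long_euclid_Suc_imp: "long_euclid (Suc k) a b \<Longrightarrow> long_euclid k a b"
  using long_euclid_mono le_SucI by blast

lemma deg_lt_pmul_const_iff: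
  "u \<noteq> 0 \<Longrightarrow> v \<noteq> 0 \<Longrightarrow> deg_lt (pmul r [:u:]) (pmul b [:v:]) \<longleftrightarrow> deg_lt r b"
  by (simp add: deg_lt_def degree_pmul_const)

lemma long_euclid_triangular:
  assumes "u \<noteq> 0" "v \<noteq> 0" "long_euclid k a b"
  shows "long_euclid k (pmul a [:u:] + pmul b t) (pmul b [:v:])"
  using assms
proof (induction k arbitrary: a b u v t)
  case (Suc k)
  then have "b \<noteq> 0" and long_b: "\<And>q. deg_lt (a - pmul b q) b \<Longrightarrow> long_euclid k b (a - pmul b q)"
    by auto
  have "long_euclid k (pmul b [:v:]) (pmul a [:u:] + pmul b t - pmul (pmul b [:v:]) q)"
    if rem: "deg_lt (pmul a [:u:] + pmul b t - pmul (pmul b [:v:]) q) (pmul b [:v:])" for q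
  proof -
    define r where "r = a - pmul b (pmul (pmul [:v:] q - t) [:inverse u:])"
    have r_u: "pmul r [:u:] = pmul a [:u:] + pmul b t - pmul (pmul b [:v:]) q"
      unfolding r_def using \<open>u \<noteq> 0\<close> by (intro fps_of_poly_inj) (simp add: algebra_simps)
    from rem have "deg_lt r b"
      using deg_lt_pmul_const_iff[OF Suc.prems(1,2), of r b] by (simp add: r_u)
    then have "long_euclid k b r"
      unfolding r_def by (rule long_b)
    from Suc.IH[OF \<open>v \<noteq> 0\<close> \<open>u \<noteq> 0\<close> this, of 0] show ?thesis by (simp add: r_u)
  qed
  with \<open>b \<noteq> 0\<close> \<open>v \<noteq> 0\<close> show ?case by simp
qed simp

lemma long_euclid_diff: "long_euclid k a b \<Longrightarrow> long_euclid k (a - pmul b t) b"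
  using long_euclid_triangular[of 1 1 k a b "- t"] by simp

lemma deg_lt_diff_pmul_imp:
  assumes "x \<noteq> 0" "deg_lt (y - pmul x q) x"
  shows "q = 0 \<or> y \<noteq> 0 \<and> degree x + degree q \<le> degree y"
proof (rule ccontr)
  assume "\<not> ?thesis"
  then have "q \<noteq> 0" "y = 0 \<or> degree y < degree (pmul x q)"
    using assms(1) degree_pmul[of x q] by auto
  then have "y - pmul x q \<noteq> 0" "degree (y - pmul x q) = degree (pmul x q)"
    using assms(1) degree_add_eq_right[of y "- pmul x q"] by auto
  moreover have "degree x \<le> degree (pmul x q)"
    using assms(1) \<open>q \<noteq> 0\<close> degree_pmul[of x q] by simp
  ultimately show False
    using assms(2) unfolding deg_lt_def by simp
qed

lemma long_euclid_const_quotient_swap: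
  assumes "c \<noteq> 0" "long_euclid k y (x - pmul y [:inverse c:])"
  shows "long_euclid k x (y - pmul x [:c:])"
proof -
  have "long_euclid k (pmul y [:inverse c:] + pmul (x - pmul y [:inverse c:]) pone)
      (pmul (x - pmul y [:inverse c:]) [:- c:])"
    using assms by (intro long_euclid_triangular) simp_all
  moreover have "pmul y [:inverse c:] + pmul (x - pmul y [:inverse c:]) pone = x"
    by (rule fps_of_poly_inj) simp
  moreover have "pmul (x - pmul y [:inverse c:]) [:- c:] = y - pmul x [:c:]"
    using assms(1) by (intro fps_of_poly_inj) (simp add: algebra_simps flip: fps_const_neg)
  ultimately show ?thesis by simp
qed

lemma long_euclid_swap:
  assumes "long_euclid (Suc k) x y"
  shows "long_euclid k y x"
proof (cases k)
  case (Suc k')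
  from assms have long_y: "\<And>q. deg_lt (x - pmul y q) y \<Longrightarrow> long_euclid k y (x - pmul y q)"
    by simp
  show ?thesis
  proof (cases "degree x < degree y")
    case True
    then show ?thesis using long_y[of 0] by (simp add: deg_lt_def)
  next
    case False
    have "x \<noteq> 0"
      using long_y[of 0] Suc False by (auto simp: deg_lt_def)
    have "long_euclid k' x (y - pmul x q)" if rem: "deg_lt (y - pmul x q) x" for q
    proof (cases "q = 0")
      case True
      then show ?thesis using assms Suc long_euclid_mono[of "Suc k" x y k'] by simp
    next
      case False
      with deg_lt_diff_pmul_imp[OF \<open>x \<noteq> 0\<close> rem] \<open>\<not> degree x < degree y\<close>
      have "degree q = 0" "degree x = degree y" by auto
      define c where "c = coeff q 0"
      with False have "q = [:c:]" "c \<noteq> 0"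
        using degree_0_id[OF \<open>degree q = 0\<close>] by auto
      moreover have "x - pmul y [:inverse c:] = - pmul (y - pmul x [:c:]) [:inverse c:]"
        using \<open>c \<noteq> 0\<close> by (intro fps_of_poly_inj) (simp add: algebra_simps)
      ultimately have "long_euclid k y (x - pmul y [:inverse c:])"
        using rem \<open>degree x = degree y\<close> by (intro long_y) (simp add: deg_lt_def degree_pmul_const)
      then show ?thesis
        using long_euclid_const_quotient_swap \<open>c \<noteq> 0\<close> \<open>q = [:c:]\<close> long_euclid_Suc_imp Suc by blast
    qed
    with \<open>x \<noteq> 0\<close> Suc show ?thesis by simp
  qed
qed simp

lemma cyc_pone_0_eq_imp: "cyc pone 0 = cyc a b \<Longrightarrow> b = 0"
proof -
  have "(a, b) \<in> cyc a b"
    unfolding cyc_def by (auto intro!: exI[of _ pone])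
  then show "cyc pone 0 = cyc a b \<Longrightarrow> b = 0"
    unfolding cyc_def by auto
qed

lemma dist_edges_from_pone_0:
  assumes "(cyc pone 0, P) \<in> dist_edges"
  obtains t where "P = cyc t pone"
proof -
  obtain a b c d where "cyc pone 0 = cyc a b" "P = cyc c d" and inv: "inv2 a b c d"
    using assms unfolding dist_edges_def distant_def by blast
  from \<open>cyc pone 0 = cyc a b\<close> have "b = 0" by (rule cyc_pone_0_eq_imp)
  with inv obtain a' b' d' where "pmul a a' = pone" "pmul a b' = 0" "pmul c b' + pmul d d' = pone"
    unfolding inv2_def by (auto simp del: pmul_eq_0_iff)
  then have "pmul d d' = pone" by auto
  then obtain \<delta> where "\<delta> \<noteq> 0" "d = [:\<delta>:]" by (rule pmul_eq_pone_imp_const)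
  moreover from this have "pmul [:inverse \<delta>:] [:\<delta>:] = pone"
    by (intro fps_of_poly_inj) simp
  ultimately have "P = cyc (pmul [:inverse \<delta>:] c) pone"
    using \<open>P = cyc c d\<close> cyc_pmul_const_left[of "inverse \<delta>" c d] by simp
  then show thesis by (rule that)
qed

lemma not_long_euclid_at_distance:
  "(cyc pone 0, cyc a b) \<in> dist_edges ^^ n \<Longrightarrow> \<not> long_euclid (Suc n) a b"
proof (induction n arbitrary: a b)
  case 0
  then have "cyc pone 0 = cyc a b" by simp
  then have "b = 0" by (rule cyc_pone_0_eq_imp)
  then show ?case by simp
next
  case (Suc n)
  from Suc.prems obtain P where edge: "(cyc pone 0, P) \<in> dist_edges"
    and path: "(P, cyc a b) \<in> dist_edges ^^ n"
    by (rule relpow_Suc_E2)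
  from edge obtain t where "P = cyc t pone" by (rule dist_edges_from_pone_0)
  with relpow_dist_edges_mat_image[OF inv2_0_pone_pone path, of "- t"]
  have "(cyc pone 0, cyc b (a - pmul b t)) \<in> dist_edges ^^ n"
    by (simp add: mat_image_cyc)
  with Suc.IH have "\<not> long_euclid (Suc n) b (a - pmul b t)" by blast
  then show ?case
    using long_euclid_swap[of "Suc n" "a - pmul b t" b] long_euclid_diff[of "Suc (Suc n)" a b t] by blast
qed

lemma long_euclid_Suc_mult_X:
  assumes "u \<noteq> 0" "deg_lt v u" "long_euclid k u v"
  shows "long_euclid (Suc k) (pmul u [:0, 1:] + v) u"
proof -
  have "long_euclid k u (pmul u [:0, 1:] + v - pmul u q)"
    if rem: "deg_lt (pmul u [:0, 1:] + v - pmul u q) u" for q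
  proof -
    have "pmul u [:0, 1:] + v - pmul u q = v - pmul u (q - [:0, 1:])"
      by (rule fps_of_poly_inj) (simp add: algebra_simps)
    with rem deg_lt_diff_pmul_imp[OF \<open>u \<noteq> 0\<close>, of v "q - [:0, 1:]"] assms(2)
    have "q = [:0, 1:]" unfolding deg_lt_def by auto
    with assms(3) show ?thesis by simp
  qed
  with assms(1) show ?thesis by simp
qed

fun continuant_pair :: "nat \<Rightarrow> 'a::division_ring poly \<times> 'a poly" where
  "continuant_pair 0 = (pone, 0)"
| "continuant_pair (Suc k) = (case continuant_pair k of (u, v) \<Rightarrow> (pmul u [:0, 1:] + v, u))"

lemma continuant_pair_props:
  assumes "continuant_pair k = (u, v)"
  shows "u \<noteq> 0 \<and> degree u = k \<and> deg_lt v u \<and> admissible u v \<and> long_euclid k u v"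
  using assms
proof (induction k arbitrary: u v)
  case 0
  then show ?case
    using inv2_lower_elementary[of 0] by (auto simp: deg_lt_def admissible_def)
next
  case (Suc k)
  obtain u' v' :: "'a poly" where uv': "continuant_pair k = (u', v')" by fastforce
  with Suc.prems have u: "u = pmul u' [:0, 1:] + v'" and v: "v = u'" by auto
  from Suc.IH[OF uv'] have "u' \<noteq> 0" "degree u' = k" "deg_lt v' u'" "admissible u' v'"
    and long: "long_euclid k u' v'" by blast+
  then have "degree u = Suc k"
    unfolding u deg_lt_def by (auto simp: degree_pmul degree_add_eq_left)
  moreover have "admissible u v"
    using admissible_mat_mult[OF inv2_const_pone_0[of 1 "[:0, 1:]"] \<open>admissible u' v'\<close>] u v by simp
  moreover have "long_euclid (Suc k) u v"
    unfolding u v using \<open>u' \<noteq> 0\<close> \<open>deg_lt v' u'\<close> long by (rule long_euclid_Suc_mult_X)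
  ultimately show ?case
    using \<open>degree u' = k\<close> v by (auto simp: deg_lt_def simp del: long_euclid.simps(2))
qed

lemma pl_diameter_infinite: "pl_diameter TYPE('a::division_ring) = \<infinity>"
proof -
  have "enat N \<le> pl_diameter TYPE('a)" for N
  proof -
    obtain u v :: "'a poly" where "continuant_pair N = (u, v)" by fastforce
    then have "admissible u v" "long_euclid N u v" using continuant_pair_props by blast+
    have "enat N \<le> pl_dist (cyc pone 0) (cyc u v)"
      unfolding pl_dist_def
    proof (rule INF_greatest)
      fix n assume "n \<in> {n. (cyc pone 0, cyc u v) \<in> dist_edges ^^ n}"
      then have "\<not> long_euclid (Suc n) u v" using not_long_euclid_at_distance by blast
      with \<open>long_euclid N u v\<close> have "\<not> Suc n \<le> N"
        using long_euclid_mono by blast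
      then show "enat N \<le> enat n" by simp
    qed
    also have "\<dots> \<le> pl_diameter TYPE('a)"
      unfolding pl_diameter_def projline_def
      using \<open>admissible u v\<close> inv2_lower_elementary[of 0]
      by (intro SUP_upper2[of "cyc pone 0"] SUP_upper) (auto simp: admissible_def)
    finally show ?thesis .
  qed
  then show ?thesis
    by (metis enat_ord_simps(1) not_enat_eq not_less_eq_eq order_refl)
qed

theorem mainTheorem12:
  shows "pl_connected TYPE('a::division_ring) \<and> pl_diameter TYPE('a) = \<infinity>"
  using pl_connected pl_diameter_infinite by blast

end
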